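(* Let $G=(V,E)$ be a graph and let $\boldsymbol{\pi}=(\pi_1,\dots,\pi_n)$ be a collection of paths, where $\pi_k=(v_k(0),v_k(1),\dots,v_k(\ell_k))$ for each $k$. Suppose $\boldsymbol{\pi}$ is disentangled. Then for every agent index $i$ and every timestep $t\ge \ell_i$, there exists at least one extension of $\pi_i$ up to timestep $t$, i.e. nodes $v_i(\ell_i+1),\dots,v_i(t)$ (each $v_i(s+1)$ equal to $v_i(s)$ or adjacent to it), such that the collection obtained by replacing $\pi_i$ with $(v_i(0),\dots,v_i(\ell_i),v_i(\ell_i+1),\dots,v_i(t))$ is still disentangled.
   Context: A path of agent $a_k$ is a sequence of nodes $\pi_k=(v_k(0),\dots,v_k(\ell_k))$, where $v_k(s)$ is the node occupied at discrete timestep $s$ and $\ell_k=|\pi_k|-1$; consecutive nodes are equal (staying) or adjacent in $G$; paths may only be extended by appending nodes at the end. Two paths $\pi_i,\pi_j$ with $\ell_i\le \ell_j$ are called disentangled if (1) $v_i(t)\ne v_j(t)$ for all $0\le t\le \ell_i$; (2) $v_i(t)\ne v_j(t-1)$ and $v_i(t-1)\ne v_j(t)$ for all $0<t\le \ell_i$; and (3) $v_i(\ell_i)\ne v_j(t)$ for all $\ell_i+1\le t\le \ell_j$. A collection $\boldsymbol{\pi}$ of paths is disentangled if every pair of its paths is disentangled. *)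

theory Defs
  imports Main
begin

definition graph :: "'a set \<Rightarrow> 'a set set \<Rightarrow> bool" where
  "graph V E \<longleftrightarrow> (\<forall>e\<in>E. \<exists>u v. e = {u, v} \<and> u \<in> V \<and> v \<in> V \<and> u \<noteq> v)"

definition adjacent :: "'a set set \<Rightarrow> 'a \<Rightarrow> 'a \<Rightarrow> bool" where
  "adjacent E u v \<longleftrightarrow> {u, v} \<in> E"

definition is_path :: "'a set \<Rightarrow> 'a set set \<Rightarrow> 'a list \<Rightarrow> bool" where
  "is_path V E p \<longleftrightarrow> p \<noteq> [] \<and> set p \<subseteq> V \<and>
     (\<forall>s. s + 1 < length p \<longrightarrow> p ! (s + 1) = p ! s \<or> adjacent E (p ! s) (p ! (s + 1)))"

abbreviation last_time :: "'a list \<Rightarrow> nat" where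
  "last_time p \<equiv> length p - 1"

text \<open>Disentangledness of p, q under the assumption l_p \<le> l_q (conditions (1)-(3)).\<close>
definition disentangled_ord :: "'a list \<Rightarrow> 'a list \<Rightarrow> bool" where
  "disentangled_ord p q \<longleftrightarrow>
     (\<forall>t. t \<le> last_time p \<longrightarrow> p ! t \<noteq> q ! t) \<and>
     (\<forall>t. 0 < t \<and> t \<le> last_time p \<longrightarrow> p ! t \<noteq> q ! (t - 1) \<and> p ! (t - 1) \<noteq> q ! t) \<and>
     (\<forall>t. last_time p + 1 \<le> t \<and> t \<le> last_time q \<longrightarrow> p ! last_time p \<noteq> q ! t)"

definition disentangled_pair :: "'a list \<Rightarrow> 'a list \<Rightarrow> bool" where
  "disentangled_pair p q \<longleftrightarrow>
     (if last_time p \<le> last_time q then disentangled_ord p q else disentangled_ord q p)"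

definition disentangled :: "nat \<Rightarrow> (nat \<Rightarrow> 'a list) \<Rightarrow> bool" where
  "disentangled n pi \<longleftrightarrow> (\<forall>i<n. \<forall>j<n. i \<noteq> j \<longrightarrow> disentangled_pair (pi i) (pi j))"

end

theory Submission
  imports Defs
begin

text \<open>
  Regard every agent as waiting at its final node forever after its last timestep.
  The three conditions of disentangledness then say exactly that these padded
  trajectories never share a node and never swap along an edge; condition (3) is the
  vertex condition after the shorter path has ended. Extending a path by waiting at its
  last node does not change its padded trajectory, so it preserves disentangledness,
  and waiting is always a legal move.
\<close>

definition node_at :: "'a list \<Rightarrow> nat \<Rightarrow> 'a" where
  "node_at p s = p ! min s (last_time p)"

definition collision_free :: "(nat \<Rightarrow> 'a) \<Rightarrow> (nat \<Rightarrow> 'a) \<Rightarrow> bool" where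
  "collision_free x y \<longleftrightarrow> (\<forall>s. x s \<noteq> y s \<and> x (Suc s) \<noteq> y s \<and> x s \<noteq> y (Suc s))"

lemma collision_free_commute: "collision_free x y = collision_free y x"
  unfolding collision_free_def by metis

lemma node_at_le: "s \<le> last_time p \<Longrightarrow> node_at p s = p ! s"
  by (simp add: node_at_def)

lemma node_at_ge: "last_time p \<le> s \<Longrightarrow> node_at p s = p ! last_time p"
  by (simp add: node_at_def)

lemma disentangled_ord_iff_collision_free:
  assumes "last_time p \<le> last_time q"
  shows "disentangled_ord p q \<longleftrightarrow> collision_free (node_at p) (node_at q)"
proof
  let ?l = "last_time p" and ?m = "last_time q"
  assume ord: "disentangled_ord p q"
  have vertex: "node_at p s \<noteq> node_at q s" for s
  proof (cases "s \<le> ?l")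
    case True
    then show ?thesis using ord assms by (simp add: disentangled_ord_def node_at_le)
  next
    case False
    have "p ! ?l \<noteq> q ! min s ?m"
    proof (cases "min s ?m = ?l")
      case True
      then show ?thesis using ord by (simp add: disentangled_ord_def)
    next
      case False
      then show ?thesis using ord assms \<open>\<not> s \<le> ?l\<close> by (simp add: disentangled_ord_def)
    qed
    then show ?thesis using False by (simp add: node_at_def)
  qed
  have swap: "node_at p (Suc s) \<noteq> node_at q s \<and> node_at p s \<noteq> node_at q (Suc s)" for s
  proof (cases "Suc s \<le> ?l")
    case True
    then show ?thesis using ord assms by (auto simp: disentangled_ord_def node_at_le)
  next
    case False
    then have "node_at p (Suc s) = node_at p s" by (simp add: node_at_ge)
    then show ?thesis using vertex by metis
  qed
  show "collision_free (node_at p) (node_at q)"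
    unfolding collision_free_def using vertex swap by blast
next
  assume "collision_free (node_at p) (node_at q)"
  then have vertex: "\<And>s. node_at p s \<noteq> node_at q s"
    and swap: "\<And>s. node_at p (Suc s) \<noteq> node_at q s \<and> node_at p s \<noteq> node_at q (Suc s)"
    unfolding collision_free_def by blast+
  show "disentangled_ord p q"
    unfolding disentangled_ord_def
  proof (intro conjI allI impI)
    fix s assume "s \<le> last_time p"
    then show "p ! s \<noteq> q ! s" using vertex[of s] assms by (simp add: node_at_le)
  next
    fix s assume s: "0 < s \<and> s \<le> last_time p"
    then obtain r where "s = Suc r" using gr0_conv_Suc by blast
    then show "p ! s \<noteq> q ! (s - 1)" and "p ! (s - 1) \<noteq> q ! s"
      using swap[of r] s assms by (simp_all add: node_at_le)
  next
    fix s assume "last_time p + 1 \<le> s \<and> s \<le> last_time q"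
    then show "p ! last_time p \<noteq> q ! s" using vertex[of s] by (simp add: node_at_le node_at_ge)
  qed
qed

lemma disentangled_pair_iff_collision_free:
  "disentangled_pair p q \<longleftrightarrow> collision_free (node_at p) (node_at q)"
  using disentangled_ord_iff_collision_free[of p q] disentangled_ord_iff_collision_free[of q p]
  by (auto simp: disentangled_pair_def collision_free_commute)

lemma disentangled_iff_collision_free:
  "disentangled n pi \<longleftrightarrow>
     (\<forall>i<n. \<forall>j<n. i \<noteq> j \<longrightarrow> collision_free (node_at (pi i)) (node_at (pi j)))"
  by (simp add: disentangled_def disentangled_pair_iff_collision_free)

lemma disentangled_cong_node_at:
  assumes "\<And>k. k < n \<Longrightarrow> node_at (pi k) = node_at (pi' k)"
  shows "disentangled n pi \<longleftrightarrow> disentangled n pi'"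
  using assms by (simp add: disentangled_iff_collision_free)

lemma nth_append_replicate_last:
  assumes "p \<noteq> []" and "j < length p + k"
  shows "(p @ replicate k (last p)) ! j = p ! min j (last_time p)"
proof (cases "j < length p")
  case True
  then have "min j (last_time p) = j" by linarith
  then show ?thesis using True by (simp add: nth_append)
next
  case False
  then have "min j (last_time p) = last_time p" by linarith
  then show ?thesis using False assms by (simp add: nth_append last_conv_nth)
qed

lemma node_at_append_replicate_last:
  assumes "p \<noteq> []"
  shows "node_at (p @ replicate k (last p)) = node_at p"
proof
  fix s
  let ?q = "p @ replicate k (last p)"
  have len: "last_time ?q = last_time p + k" using assms by (cases p) simp_all
  have "min s (last_time p + k) < length p + k" using assms by (cases p) auto
  then have "node_at ?q s = p ! min (min s (last_time p + k)) (last_time p)"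
    unfolding node_at_def len by (rule nth_append_replicate_last[OF assms])
  also have "\<dots> = node_at p s" by (simp add: node_at_def min_def)
  finally show "node_at ?q s = node_at p s" .
qed

lemma is_path_append_replicate_last:
  assumes "is_path V E p"
  shows "is_path V E (p @ replicate k (last p))"
  unfolding is_path_def
proof (intro conjI allI impI)
  have "p \<noteq> []" and "set p \<subseteq> V" using assms by (simp_all add: is_path_def)
  then show "p @ replicate k (last p) \<noteq> []" and "set (p @ replicate k (last p)) \<subseteq> V"
    by auto
next
  fix s
  let ?q = "p @ replicate k (last p)"
  assume s: "s + 1 < length ?q"
  show "?q ! (s + 1) = ?q ! s \<or> adjacent E (?q ! s) (?q ! (s + 1))"
  proof (cases "s + 1 < length p")
    case True
    then show ?thesis using assms by (simp add: is_path_def nth_append)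
  next
    case False
    have "p \<noteq> []" using assms by (simp add: is_path_def)
    then have "min (s + 1) (last_time p) = last_time p" and "min s (last_time p) = last_time p"
      using False by linarith+
    then have "?q ! (s + 1) = p ! last_time p" and "?q ! s = p ! last_time p"
      using \<open>p \<noteq> []\<close> s nth_append_replicate_last[of p "s + 1" k] nth_append_replicate_last[of p s k]
      by simp_all
    then show ?thesis by simp
  qed
qed

theorem proposition3p6:
  fixes V :: "'a set" and E :: "'a set set" and n :: nat and pi :: "nat \<Rightarrow> 'a list"
  assumes "graph V E"
    and "\<forall>k<n. is_path V E (pi k)"
    and "disentangled n pi"
    and "i < n"
    and "t \<ge> last_time (pi i)"
  shows "\<exists>p'. is_path V E p' \<and> length p' = t + 1 \<and> take (length (pi i)) p' = pi i \<and>
               disentangled n (pi(i := p'))"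
proof -
  define p' where "p' = pi i @ replicate (t - last_time (pi i)) (last (pi i))"
  have path: "is_path V E (pi i)" using assms(2,4) by simp
  then have "pi i \<noteq> []" by (simp add: is_path_def)
  then have "length p' = t + 1" and "node_at p' = node_at (pi i)"
    using assms(5) by (auto simp: p'_def node_at_append_replicate_last neq_Nil_conv)
  moreover have "disentangled n (pi(i := p'))"
    using assms(3) \<open>node_at p' = node_at (pi i)\<close> disentangled_cong_node_at[of n "pi(i := p')" pi]
    by simp
  moreover have "is_path V E p'" using path by (simp add: p'_def is_path_append_replicate_last)
  ultimately show ?thesis by (auto simp: p'_def)
qed

end
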